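(* Let $N$ be a positive integer, let $\omega$ be a nonconstant finite Blaschke product of order $n\le N$, and let $c>0$. Define $\psi$ on $\mathbb{T}$ (a.e.) by $\psi(\zeta)=\frac{2c}{\pi}\operatorname{Arg}\left(\frac{1+\omega(\zeta)}{1-\omega(\zeta)}\right)$, i.e. $\psi=2\operatorname{Re} h$ on $\mathbb{T}$ where $h=\frac{c}{\pi i}\operatorname{Log}\left(\frac{1+\omega}{1-\omega}\right)$. Then $\psi$ is an alternating step function of height $c$ and order $n$, and, letting $A=(\hat\psi(j-k))_{j,k=0}^N$, $\psi$ is the function of minimum $L^\infty$-norm in $\mathcal{G}_A$; that is, $\|\psi\|_\infty = c = c_A$.
   Context: $\mathbb{T}$ is the unit circle with normalized Lebesgue measure; $\hat f(n)=\frac{1}{2\pi}\int_0^{2\pi} f(e^{i\theta})e^{-in\theta}\,d\theta$. $\operatorname{Log}$ and $\operatorname{Arg}$ denote principal branches. For an $(N+1)\times(N+1)$ Toeplitz matrix $A=(a_{j-k})_{j,k=0}^N$, $\mathcal{G}_A$ is the set of $f\in L^\infty(\mathbb{T})$ with $\hat f(m)=a_m$ for $m=-N,\dots,N$, and $c_A=\min\{\|f\|_\infty: f\in\mathcal{G}_A\}$. For $c>0$ and $n$ a positive integer, an alternating step function of height $c$ and order $n$ is a function in $L^\infty(\mathbb{T})$ that assumes (a.e.) alternately the values $c$ and $-c$ on $2n$ (nondegenerate) subarcs forming a partition of $\mathbb{T}$. *)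

theory Defs
  imports "HOL-Analysis.Analysis"
begin

text \<open>Functions on the unit circle T are represented as functions complex => complex,
  evaluated at cis theta; the normalized Lebesgue measure on T corresponds to
  Lebesgue measure on [0, 2 pi] divided by 2 pi.\<close>

definition blaschke :: "complex \<Rightarrow> (nat \<Rightarrow> complex) \<Rightarrow> nat \<Rightarrow> complex \<Rightarrow> complex" where
  "blaschke lam a n z = lam * (\<Prod>k<n. (z - a k) / (1 - cnj (a k) * z))"

definition is_blaschke :: "complex \<Rightarrow> (nat \<Rightarrow> complex) \<Rightarrow> nat \<Rightarrow> bool" where
  "is_blaschke lam a n \<longleftrightarrow> norm lam = 1 \<and> (\<forall>k<n. norm (a k) < 1)"

definition Linf :: "(complex \<Rightarrow> complex) \<Rightarrow> bool" where
  "Linf f \<longleftrightarrow> (\<lambda>\<theta>. f (cis \<theta>)) \<in> borel_measurable (restrict_space lborel {0..2*pi})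
      \<and> (\<exists>M. AE \<theta> in lborel. \<theta> \<in> {0..2*pi} \<longrightarrow> norm (f (cis \<theta>)) \<le> M)"

definition ess_norm :: "(complex \<Rightarrow> complex) \<Rightarrow> real" where
  "ess_norm f = Inf {M. AE \<theta> in lborel. \<theta> \<in> {0..2*pi} \<longrightarrow> norm (f (cis \<theta>)) \<le> M}"

definition fourier :: "(complex \<Rightarrow> complex) \<Rightarrow> int \<Rightarrow> complex" where
  "fourier f m = (1 / (2 * pi)) * (LINT \<theta>:{0..2*pi}|lborel. f (cis \<theta>) * cis (- (of_int m * \<theta>)))"

definition G_set :: "(nat \<Rightarrow> nat \<Rightarrow> complex) \<Rightarrow> nat \<Rightarrow> (complex \<Rightarrow> complex) set" where
  "G_set A N = {f. Linf f \<and> (\<forall>j\<le>N. \<forall>k\<le>N. fourier f (int j - int k) = A j k)}"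

definition c_A :: "(nat \<Rightarrow> nat \<Rightarrow> complex) \<Rightarrow> nat \<Rightarrow> real" where
  "c_A A N = Inf (ess_norm ` G_set A N)"

definition alt_step :: "(complex \<Rightarrow> complex) \<Rightarrow> real \<Rightarrow> nat \<Rightarrow> bool" where
  "alt_step f c n \<longleftrightarrow> (\<exists>t :: nat \<Rightarrow> real. \<exists>s :: real. (s = 1 \<or> s = -1)
      \<and> (\<forall>k<2*n. t k < t (Suc k)) \<and> t (2*n) = t 0 + 2*pi
      \<and> (\<forall>k<2*n. AE \<theta> in lborel. \<theta> \<in> {t k<..<t (Suc k)} \<longrightarrow>
            f (cis \<theta>) = complex_of_real (s * (-1)^k * c)))"

end

theory Submission
  imports Defs
begin

text \<open>On the circle the Blaschke product is \<open>cis \<Phi>\<close> for a continuous, strictly increasing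
  argument \<open>\<Phi>\<close> with \<open>\<Phi> (t + 2\<pi>) = \<Phi> t + 2\<pi>n\<close>, and
  \<open>(1 + cis p) / (1 - cis p) = \<i> sin p / (1 - cos p)\<close>, so \<open>\<psi> = c sgn (sin \<Phi>)\<close>: it changes
  sign exactly where \<open>\<Phi>\<close> crosses a multiple of \<open>\<pi>\<close>, i.e. \<open>2n\<close> times per turn.
  For minimality, \<open>g = sin \<Phi> |\<Prod>\<^sub>k (1 - a\<^sub>k\<^sup>* z)|\<^sup>2 = Im (\<lambda> \<Prod>\<^sub>k (z - a\<^sub>k)(1 - a\<^sub>k z\<^sup>*))\<close>
  is a real trigonometric polynomial of degree \<open>n \<le> N\<close> with \<open>\<psi> g = c |g|\<close>. If \<open>f\<close> shares the
  Fourier coefficients of \<open>\<psi>\<close> up to index \<open>N\<close>, then \<open>\<psi> - f\<close> is orthogonal to \<open>g\<close>, hence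
  \<open>c \<integral>|g| = \<integral>\<psi> g = \<integral>f g \<le> \<parallel>f\<parallel>\<^sub>\<infinity> \<integral>|g|\<close> and \<open>\<parallel>f\<parallel>\<^sub>\<infinity> \<ge> c = \<parallel>\<psi>\<parallel>\<^sub>\<infinity>\<close>.\<close>

section \<open>Blaschke products on the circle\<close>

definition blaschke_factor_arg :: "complex \<Rightarrow> real \<Rightarrow> real" where
  "blaschke_factor_arg a t = t + 2 * Arg (1 - a * cis (- t))"

lemma Re_one_minus_mult_cis_pos:
  assumes "norm a < 1" shows "0 < Re (1 - a * cis t)"
proof -
  have "Re (a * cis t) \<le> norm (a * cis t)" by (rule complex_Re_le_cmod)
  also have "\<dots> = norm a" by (simp add: norm_mult)
  finally show ?thesis using assms by simp
qed

lemma div_cnj_eq_cis_Arg: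
  assumes "u \<noteq> 0" shows "u / cnj u = cis (2 * Arg u)"
proof -
  have u: "u = complex_of_real (norm u) * cis (Arg u)"
    using rcis_cmod_Arg[of u] by (simp add: rcis_def)
  have "cnj u = complex_of_real (norm u) * cis (- Arg u)"
    by (subst u) (simp add: cis_cnj)
  then have "u / cnj u = cis (Arg u) / cis (- Arg u)"
    using assms by (subst (1) u) (simp add: field_simps)
  also have "\<dots> = cis (2 * Arg u)" by (simp add: cis_divide)
  finally show ?thesis .
qed

lemma blaschke_factor_cis:
  assumes "norm a < 1"
  shows "(cis t - a) / (1 - cnj a * cis t) = cis (blaschke_factor_arg a t)"
proof -
  define u where "u = 1 - a * cis (- t)"
  have "0 < Re u" unfolding u_def by (rule Re_one_minus_mult_cis_pos[OF assms])
  then have "u \<noteq> 0" by auto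
  moreover have "cis t - a = cis t * u" "1 - cnj a * cis t = cnj u"
    by (simp_all add: u_def algebra_simps cis_mult cis_cnj)
  ultimately have "(cis t - a) / (1 - cnj a * cis t) = cis t * (u / cnj u)"
    by simp
  also have "\<dots> = cis t * cis (2 * Arg u)"
    using \<open>u \<noteq> 0\<close> by (simp add: div_cnj_eq_cis_Arg)
  finally
  show ?thesis by (simp add: cis_mult blaschke_factor_arg_def u_def)
qed

lemma arctan_quotient_derivative_identity:
  fixes R I S :: real
  assumes "0 < R" and "R = 1 - S"
  shows "1 + 2 * (inverse (1 + (I / R)\<^sup>2) * ((S * R - I * I) / (R * R)))
       = (1 - (S\<^sup>2 + I\<^sup>2)) / (R\<^sup>2 + I\<^sup>2)"
proof -
  have D: "0 < R\<^sup>2 + I\<^sup>2" using assms(1) by (simp add: add_pos_nonneg)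
  have "1 + (I / R)\<^sup>2 = (R\<^sup>2 + I\<^sup>2) / R\<^sup>2" using assms(1) by (simp add: field_simps)
  then have "1 + 2 * (inverse (1 + (I / R)\<^sup>2) * ((S * R - I * I) / (R * R)))
      = 1 + 2 * ((S * R - I * I) / (R\<^sup>2 + I\<^sup>2))"
    using assms(1) D by (simp add: power2_eq_square)
  also have "\<dots> = (R\<^sup>2 + I\<^sup>2 + 2 * (S * R - I * I)) / (R\<^sup>2 + I\<^sup>2)"
    using assms(1) by (simp add: add_divide_distrib)
  also have "R\<^sup>2 + I\<^sup>2 + 2 * (S * R - I * I) = 1 - (S\<^sup>2 + I\<^sup>2)"
    unfolding assms(2) by (simp add: power2_eq_square algebra_simps)
  finally show ?thesis .
qed

text \<open>The derivative is the Poisson kernel \<open>(1 - |a|\<^sup>2) / |1 - a e\<^sup>-\<^sup>i\<^sup>t|\<^sup>2\<close>; on the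
  right half-plane \<open>Arg\<close> is an arctangent, which makes it computable by the chain rule.\<close>
lemma blaschke_factor_arg_has_derivative:
  assumes "norm a < 1"
  shows "(blaschke_factor_arg a has_real_derivative
            (1 - (norm a)\<^sup>2) / (norm (1 - a * cis (- t)))\<^sup>2) (at t)"
proof -
  define x y where "x = Re a" and "y = Im a"
  define R where "R t = 1 - x * cos t - y * sin t" for t
  define I where "I t = x * sin t - y * cos t" for t
  define S where "S = x * cos t + y * sin t"
  have u: "1 - a * cis (- s) = Complex (R s) (I s)" for s
    by (simp add: complex_eq_iff R_def I_def x_def y_def)
  have R_pos: "0 < R s" for s
    using Re_one_minus_mult_cis_pos[OF assms, of "- s"] by (simp add: u)
  have eq: "blaschke_factor_arg a = (\<lambda>t. t + 2 * arctan (I t / R t))"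
    using R_pos by (simp add: fun_eq_iff blaschke_factor_arg_def u arg_conv_arctan)
  have "((\<lambda>t. I t / R t) has_real_derivative (S * R t - I t * I t) / (R t * R t)) (at t)"
    unfolding R_def I_def S_def using R_pos[of t]
    by (auto intro!: derivative_eq_intros simp: R_def algebra_simps)
  from DERIV_add[OF DERIV_ident DERIV_cmult[OF DERIV_chain2[OF DERIV_arctan this]], of 2]
  have "(blaschke_factor_arg a has_real_derivative
          1 + 2 * (inverse (1 + (I t / R t)\<^sup>2) * ((S * R t - I t * I t) / (R t * R t)))) (at t)"
    unfolding eq by simp
  also have "1 + 2 * (inverse (1 + (I t / R t)\<^sup>2) * ((S * R t - I t * I t) / (R t * R t)))
      = (1 - (S\<^sup>2 + (I t)\<^sup>2)) / ((R t)\<^sup>2 + (I t)\<^sup>2)"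
    using R_pos[of t] by (intro arctan_quotient_derivative_identity) (simp_all add: R_def S_def)
  also have "S\<^sup>2 + (I t)\<^sup>2 = (x\<^sup>2 + y\<^sup>2) * ((sin t)\<^sup>2 + (cos t)\<^sup>2)"
    unfolding S_def I_def by algebra
  also have "(R t)\<^sup>2 + (I t)\<^sup>2 = (norm (1 - a * cis (- t)))\<^sup>2"
    by (simp add: u cmod_power2)
  finally show ?thesis
    by (simp add: x_def y_def cmod_power2)
qed

lemma blaschke_factor_arg_strict_mono:
  assumes "norm a < 1" shows "strict_mono (blaschke_factor_arg a)"
proof (rule strict_monoI)
  have deriv_pos: "\<exists>D. (blaschke_factor_arg a has_real_derivative D) (at t) \<and> 0 < D" for t
  proof -
    have "0 < 1 - (norm a)\<^sup>2" using assms by (simp add: power_less_one_iff abs_square_less_1)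
    moreover have "1 - a * cis (- t) \<noteq> 0"
      using Re_one_minus_mult_cis_pos[OF assms, of "- t"] by (metis less_irrefl zero_complex.sel(1))
    ultimately show ?thesis using blaschke_factor_arg_has_derivative[OF assms] by force
  qed
  show "blaschke_factor_arg a s < blaschke_factor_arg a t" if "s < t" for s t
    using DERIV_pos_imp_increasing[OF that deriv_pos] .
qed

lemma isCont_blaschke_factor_arg:
  assumes "norm a < 1" shows "isCont (blaschke_factor_arg a) t"
  using blaschke_factor_arg_has_derivative[OF assms] by (rule DERIV_isCont)

lemma blaschke_factor_arg_add_2pi:
  "blaschke_factor_arg a (t + 2 * pi) = blaschke_factor_arg a t + 2 * pi"
proof -
  have "cis (- (t + 2 * pi)) = cis (- t)" by (simp add: complex_eq_iff cos_diff sin_diff)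
  then show ?thesis by (simp add: blaschke_factor_arg_def)
qed

definition blaschke_arg :: "complex \<Rightarrow> (nat \<Rightarrow> complex) \<Rightarrow> nat \<Rightarrow> real \<Rightarrow> real" where
  "blaschke_arg lam a n t = Arg lam + (\<Sum>k<n. blaschke_factor_arg (a k) t)"

lemma prod_cis: "(\<Prod>k\<in>A. cis (f k)) = cis (\<Sum>k\<in>A. f k)"
  by (induction A rule: infinite_finite_induct) (auto simp: cis_mult)

lemma blaschke_cis:
  assumes "is_blaschke lam a n"
  shows "blaschke lam a n (cis t) = cis (blaschke_arg lam a n t)"
proof -
  have "norm lam = 1" using assms by (simp add: is_blaschke_def)
  then have "lam \<noteq> 0" by auto
  with \<open>norm lam = 1\<close> have lam: "cis (Arg lam) = lam" by (simp add: cis_Arg sgn_div_norm)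
  have "blaschke lam a n (cis t) = lam * (\<Prod>k<n. cis (blaschke_factor_arg (a k) t))"
    using assms by (simp add: blaschke_def is_blaschke_def blaschke_factor_cis)
  also have "\<dots> = cis (blaschke_arg lam a n t)"
    by (subst (1) lam[symmetric]) (simp add: prod_cis blaschke_arg_def cis_mult)
  finally show ?thesis .
qed

lemma blaschke_arg_strict_mono:
  assumes "is_blaschke lam a n" and "1 \<le> n"
  shows "strict_mono (blaschke_arg lam a n)"
proof (rule strict_monoI)
  fix s t :: real assume "s < t"
  have "(\<Sum>k<n. blaschke_factor_arg (a k) s) < (\<Sum>k<n. blaschke_factor_arg (a k) t)"
    using assms \<open>s < t\<close>
    by (intro sum_strict_mono)
      (auto simp: is_blaschke_def strict_mono_less blaschke_factor_arg_strict_mono lessThan_empty_iff)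
  then show "blaschke_arg lam a n s < blaschke_arg lam a n t"
    by (simp add: blaschke_arg_def)
qed

lemma isCont_blaschke_arg:
  assumes "is_blaschke lam a n" shows "isCont (blaschke_arg lam a n) t"
  using assms unfolding blaschke_arg_def[abs_def]
  by (intro continuous_intros isCont_blaschke_factor_arg) (auto simp: is_blaschke_def)

lemma blaschke_arg_add_2pi:
  "blaschke_arg lam a n (t + 2 * pi) = blaschke_arg lam a n t + 2 * pi * n"
  by (simp add: blaschke_arg_def blaschke_factor_arg_add_2pi sum.distrib)

section \<open>The alternating step function\<close>

text \<open>At \<open>cis p = 1\<close> both sides are \<open>0\<close>, by the convention \<open>x / 0 = 0\<close>.\<close>
lemma one_plus_cis_div_one_minus_cis:
  "(1 + cis p) / (1 - cis p) = \<i> * complex_of_real (sin p / (1 - cos p))"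
proof (cases "cos p = 1")
  case True
  then have "sin p = 0" using sin_cos_squared_add[of p] by (simp add: power2_eq_square)
  with True have "cis p = 1" by (simp add: complex_eq_iff)
  then show ?thesis using True by simp
next
  case False
  then have "1 - cis p \<noteq> 0" by (auto simp: complex_eq_iff)
  moreover have "sin p * sin p = (1 - cos p) * (1 + cos p)"
    using sin_squared_eq[of p] by (simp add: power2_eq_square algebra_simps)
  then have "1 + cis p = \<i> * complex_of_real (sin p / (1 - cos p)) * (1 - cis p)"
    using False by (simp add: complex_eq_iff field_simps)
  ultimately show ?thesis by (metis nonzero_mult_div_cancel_right)
qed

lemma Arg_ii_times_of_real: "Arg (\<i> * complex_of_real r) = pi / 2 * sgn r"
proof -
  consider "0 < r" | "r < 0" | "r = 0" by linarith
  then show ?thesis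
  proof cases
    case 1
    then show ?thesis by (simp add: mult.commute[of \<i>])
  next
    case 2
    have "\<i> * complex_of_real r = complex_of_real (- r) * (- \<i>)" by simp
    then show ?thesis using Arg_times_of_real[of "- r" "- \<i>"] 2 by (simp add: mult.commute[of \<i>])
  qed (simp add: Arg_zero)
qed

lemma Arg_one_plus_cis_div_one_minus_cis:
  "Arg ((1 + cis p) / (1 - cis p)) = pi / 2 * sgn (sin p)"
proof -
  have "sgn (sin p / (1 - cos p)) = sgn (sin p)"
  proof (cases "cos p = 1")
    case True
    then have "sin p = 0" using sin_cos_squared_add[of p] by (simp add: power2_eq_square)
    then show ?thesis by simp
  next
    case False
    then have "0 < 1 - cos p" using cos_le_one[of p] by linarith
    then show ?thesis by simp
  qed
  moreover have "Arg ((1 + cis p) / (1 - cis p)) = pi / 2 * sgn (sin p / (1 - cos p))"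
    by (simp only: one_plus_cis_div_one_minus_cis Arg_ii_times_of_real)
  ultimately show ?thesis by simp
qed

lemma sgn_sin_between:
  fixes j :: int
  assumes "2 * pi * of_int j + real k * pi < x" and "x < 2 * pi * of_int j + real (Suc k) * pi"
  shows "sgn (sin x) = (-1) ^ k"
proof -
  define y where "y = x - 2 * pi * of_int j - real k * pi"
  have "0 < sin y" using assms by (intro sin_gt_zero) (auto simp: y_def algebra_simps)
  moreover have "sin x = sin (y + real k * pi + 2 * pi * of_int j)" by (simp add: y_def)
  then have "sin x = sin y * (-1) ^ k" by (simp add: sin_add)
  ultimately show ?thesis by (cases "even k") (simp_all add: sgn_mult)
qed

lemma crossings_of_multiples_of_pi:
  fixes P :: "real \<Rightarrow> real" and n :: nat
  assumes cont: "\<And>x. isCont P x"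
    and per: "\<And>t. P (t + 2 * pi) = P t + 2 * pi * n" and "1 \<le> n"
  shows "\<exists>(j :: int) (t :: nat \<Rightarrow> real). \<forall>k \<le> 2 * n. P (t k) = 2 * pi * of_int j + real k * pi"
proof -
  define j where "j = \<lceil>P 0 / (2 * pi)\<rceil>"
  define b where "b = 2 * pi * of_int j"
  have "P 0 / (2 * pi) \<le> of_int j" "of_int j < P 0 / (2 * pi) + 1"
    unfolding j_def by linarith+
  then have b: "P 0 \<le> b" "b < P 0 + 2 * pi"
    by (simp_all add: b_def field_simps)
  have P4: "P (4 * pi) = P 0 + 4 * pi * n" using per[of 0] per[of "2 * pi"] by simp
  have "\<exists>x. P x = b + real k * pi" if "k \<le> 2 * n" for k
  proof -
    have "real k * pi \<le> 2 * pi * n" using that by (simp add: mult_right_mono)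
    moreover have "2 * pi \<le> 2 * pi * n" using \<open>1 \<le> n\<close> by simp
    ultimately have "b + real k * pi \<le> P (4 * pi)" using b P4 by linarith
    moreover have "P 0 \<le> b + real k * pi" using b(1) pi_gt_zero by (simp add: add_increasing2)
    ultimately show ?thesis using IVT[of P 0 "b + real k * pi" "4 * pi"] cont by auto
  qed
  then obtain t where "\<forall>k \<le> 2 * n. P (t k) = b + real k * pi" by metis
  then show ?thesis unfolding b_def by blast
qed

lemma alt_step_of_sgn_sin:
  fixes P :: "real \<Rightarrow> real"
  assumes mono: "strict_mono P" and cont: "\<And>x. isCont P x"
    and per: "\<And>t. P (t + 2 * pi) = P t + 2 * pi * n" and "1 \<le> n"
    and f: "\<And>\<theta>. f (cis \<theta>) = complex_of_real (c * sgn (sin (P \<theta>)))"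
  shows "alt_step f c n"
proof -
  obtain j t where t: "\<forall>k \<le> 2 * n. P (t k) = 2 * pi * of_int j + real k * pi"
    using crossings_of_multiples_of_pi[of P n, OF cont per \<open>1 \<le> n\<close>] by blast
  have "P (t (2 * n)) = P (t 0 + 2 * pi)" using t per by simp
  then have t_end: "t (2 * n) = t 0 + 2 * pi" using strict_mono_eq[OF mono] by blast
  have t_less: "t k < t (Suc k)" if "k < 2 * n" for k
  proof -
    have "P (t k) < P (t (Suc k))" using t that by (simp add: distrib_right)
    then show ?thesis using strict_mono_less[OF mono] by blast
  qed
  have "f (cis \<theta>) = complex_of_real (1 * (-1) ^ k * c)"
    if "k < 2 * n" and "\<theta> \<in> {t k<..<t (Suc k)}" for k \<theta>
  proof -
    have "P (t k) < P \<theta>" "P \<theta> < P (t (Suc k))"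
      using that(2) strict_mono_less[OF mono] by auto
    then have "2 * pi * of_int j + real k * pi < P \<theta>" "P \<theta> < 2 * pi * of_int j + real (Suc k) * pi"
      using t that(1) by auto
    then have "sgn (sin (P \<theta>)) = (-1) ^ k" by (rule sgn_sin_between)
    then show ?thesis by (simp add: f mult.commute)
  qed
  then show ?thesis unfolding alt_step_def using t_less t_end
    by (intro exI[of _ t] exI[of _ 1]) auto
qed

section \<open>Trigonometric polynomials\<close>

definition trig_poly :: "nat \<Rightarrow> (real \<Rightarrow> complex) \<Rightarrow> bool" where
  "trig_poly N k \<longleftrightarrow> (\<exists>d. \<forall>\<theta>. k \<theta> = (\<Sum>m\<in>{- int N..int N}. d m * cis (of_int m * \<theta>)))"

lemma trig_poly_cis:
  assumes "\<bar>m\<bar> \<le> int N" shows "trig_poly N (\<lambda>\<theta>. c * cis (of_int m * \<theta>))"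
  unfolding trig_poly_def
proof (intro exI allI)
  fix \<theta>
  have "(\<Sum>j\<in>{- int N..int N}. (if j = m then c else 0) * cis (of_int j * \<theta>))
      = (\<Sum>j\<in>{- int N..int N}. if j = m then c * cis (of_int m * \<theta>) else 0)"
    by (rule sum.cong) auto
  also have "\<dots> = c * cis (of_int m * \<theta>)" using assms by (simp add: abs_le_iff)
  finally show "c * cis (of_int m * \<theta>)
      = (\<Sum>j\<in>{- int N..int N}. (if j = m then c else 0) * cis (of_int j * \<theta>))" ..
qed

lemma trig_poly_add:
  assumes "trig_poly N k" and "trig_poly N l" shows "trig_poly N (\<lambda>\<theta>. k \<theta> + l \<theta>)"
proof -
  obtain d e where "\<And>\<theta>. k \<theta> = (\<Sum>m\<in>{- int N..int N}. d m * cis (of_int m * \<theta>))"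
    and "\<And>\<theta>. l \<theta> = (\<Sum>m\<in>{- int N..int N}. e m * cis (of_int m * \<theta>))"
    using assms by (auto simp: trig_poly_def)
  then show ?thesis unfolding trig_poly_def
    by (intro exI[of _ "\<lambda>m. d m + e m"]) (simp add: distrib_right sum.distrib)
qed

lemma trig_poly_sum:
  assumes "\<And>x. x \<in> A \<Longrightarrow> trig_poly N (k x)" shows "trig_poly N (\<lambda>\<theta>. \<Sum>x\<in>A. k x \<theta>)"
  using assms
proof (induction A rule: infinite_finite_induct)
  case (infinite A)
  then show ?case using trig_poly_cis[of 0 N 0] by simp
next
  case empty
  then show ?case using trig_poly_cis[of 0 N 0] by simp
qed (auto intro: trig_poly_add)

lemma trig_poly_mono:
  assumes "trig_poly M k" and "M \<le> N" shows "trig_poly N k"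
proof -
  obtain d where "k = (\<lambda>\<theta>. \<Sum>m\<in>{- int M..int M}. d m * cis (of_int m * \<theta>))"
    using assms(1) by (auto simp: trig_poly_def)
  moreover have "trig_poly N (\<lambda>\<theta>. \<Sum>m\<in>{- int M..int M}. d m * cis (of_int m * \<theta>))"
    using assms(2) by (intro trig_poly_sum trig_poly_cis) auto
  ultimately show ?thesis by simp
qed

lemma trig_poly_mult:
  assumes "trig_poly M k" and "trig_poly N l" shows "trig_poly (M + N) (\<lambda>\<theta>. k \<theta> * l \<theta>)"
proof -
  obtain d e where "\<And>\<theta>. k \<theta> = (\<Sum>i\<in>{- int M..int M}. d i * cis (of_int i * \<theta>))"
    and "\<And>\<theta>. l \<theta> = (\<Sum>j\<in>{- int N..int N}. e j * cis (of_int j * \<theta>))"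
    using assms by (auto simp: trig_poly_def)
  then have "(\<lambda>\<theta>. k \<theta> * l \<theta>) = (\<lambda>\<theta>. \<Sum>i\<in>{- int M..int M}. \<Sum>j\<in>{- int N..int N}.
      (d i * e j) * cis (of_int (i + j) * \<theta>))"
    by (simp add: sum_product algebra_simps cis_mult)
  moreover have "trig_poly (M + N) (\<lambda>\<theta>. \<Sum>i\<in>{- int M..int M}. \<Sum>j\<in>{- int N..int N}.
      (d i * e j) * cis (of_int (i + j) * \<theta>))"
    by (intro trig_poly_sum trig_poly_cis) auto
  ultimately show ?thesis by simp
qed

lemma trig_poly_prod:
  assumes "\<And>x. x \<in> A \<Longrightarrow> trig_poly (N x) (k x)"
  shows "trig_poly (\<Sum>x\<in>A. N x) (\<lambda>\<theta>. \<Prod>x\<in>A. k x \<theta>)"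
  using assms
proof (induction A rule: infinite_finite_induct)
  case (infinite A)
  then show ?case using trig_poly_cis[of 0 0 1] by simp
next
  case empty
  then show ?case using trig_poly_cis[of 0 0 1] by simp
qed (auto intro: trig_poly_mult)

lemma trig_poly_cmult:
  assumes "trig_poly N k" shows "trig_poly N (\<lambda>\<theta>. c * k \<theta>)"
  using trig_poly_mult[OF trig_poly_cis[of 0 0 c] assms] by simp

lemma trig_poly_cnj:
  assumes "trig_poly N k" shows "trig_poly N (\<lambda>\<theta>. cnj (k \<theta>))"
proof -
  obtain d where d: "\<And>\<theta>. k \<theta> = (\<Sum>m\<in>{- int N..int N}. d m * cis (of_int m * \<theta>))"
    using assms by (auto simp: trig_poly_def)
  have "cnj (k \<theta>) = (\<Sum>m\<in>{- int N..int N}. cnj (d m) * cis (of_int (- m) * \<theta>))" for \<theta>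
    by (simp add: d cis_cnj)
  then have "(\<lambda>\<theta>. cnj (k \<theta>)) = (\<lambda>\<theta>. \<Sum>m\<in>{- int N..int N}. cnj (d m) * cis (of_int (- m) * \<theta>))"
    by simp
  moreover have "trig_poly N \<dots>" by (intro trig_poly_sum trig_poly_cis) auto
  ultimately show ?thesis by simp
qed

lemma trig_poly_Im:
  assumes "trig_poly N k" shows "trig_poly N (\<lambda>\<theta>. complex_of_real (Im (k \<theta>)))"
proof -
  have "complex_of_real (Im z) = - (\<i> / 2) * z + (\<i> / 2) * cnj z" for z
    by (simp add: complex_eq_iff)
  moreover have "trig_poly N (\<lambda>\<theta>. - (\<i> / 2) * k \<theta> + (\<i> / 2) * cnj (k \<theta>))"
    by (intro trig_poly_add trig_poly_cmult trig_poly_cnj assms)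
  ultimately show ?thesis by simp
qed

lemma continuous_on_trig_poly:
  assumes "trig_poly N k" shows "continuous_on UNIV k"
proof -
  obtain d where k: "k = (\<lambda>\<theta>. \<Sum>m\<in>{- int N..int N}. d m * cis (of_int m * \<theta>))"
    using assms by (auto simp: trig_poly_def)
  show ?thesis unfolding k by (intro continuous_intros)
qed

abbreviation lborel_2pi :: "real measure" where
  "lborel_2pi \<equiv> restrict_space lborel {0..2*pi}"

lemma finite_measure_lborel_2pi: "finite_measure lborel_2pi"
  by (rule finite_measureI) (simp add: emeasure_restrict_space)

lemma set_integral_eq_lborel_2pi:
  fixes F :: "real \<Rightarrow> 'b::{banach, second_countable_topology}"
  shows "(LINT \<theta>:{0..2*pi}|lborel. F \<theta>) = integral\<^sup>L lborel_2pi F"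
  unfolding set_lebesgue_integral_def by (rule integral_restrict_space[symmetric]) simp

lemma integrable_lborel_2pi_bounded:
  fixes k :: "real \<Rightarrow> 'b::{banach, second_countable_topology}"
  assumes "k \<in> borel_measurable lborel_2pi"
    and "AE \<theta> in lborel. \<theta> \<in> {0..2*pi} \<longrightarrow> norm (k \<theta>) \<le> B"
  shows "integrable lborel_2pi k"
  using finite_measure.integrable_const_bound[OF finite_measure_lborel_2pi _ assms(1)] assms(2)
  by (simp add: AE_restrict_space_iff)

lemma continuous_bounded_on_0_2pi:
  fixes k :: "real \<Rightarrow> 'b::real_normed_vector"
  assumes "continuous_on UNIV k" shows "\<exists>B. \<forall>\<theta>\<in>{0..2*pi}. norm (k \<theta>) \<le> B"
  using compact_imp_bounded[OF compact_continuous_image[OF continuous_on_subset[OF assms]]]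
  by (auto simp: bounded_iff)

lemma integrable_lborel_2pi_continuous:
  fixes k :: "real \<Rightarrow> 'b::{banach, second_countable_topology}"
  assumes "continuous_on UNIV k" shows "integrable lborel_2pi k"
proof -
  obtain B where "\<forall>\<theta>\<in>{0..2*pi}. norm (k \<theta>) \<le> B"
    using continuous_bounded_on_0_2pi[OF assms] by blast
  then show ?thesis
    using borel_measurable_continuous_onI[OF assms]
    by (intro integrable_lborel_2pi_bounded[where B = B]) (auto simp: measurable_restrict_space1)
qed

lemma integrable_lborel_2pi_Linf_mult:
  assumes f: "Linf f" and k: "continuous_on UNIV k"
  shows "integrable lborel_2pi (\<lambda>\<theta>. f (cis \<theta>) * k \<theta>)"
proof -
  obtain M where M: "AE \<theta> in lborel. \<theta> \<in> {0..2*pi} \<longrightarrow> norm (f (cis \<theta>)) \<le> M"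
    and f_meas: "(\<lambda>\<theta>. f (cis \<theta>)) \<in> borel_measurable lborel_2pi"
    using f unfolding Linf_def by blast
  obtain B where B: "\<forall>\<theta>\<in>{0..2*pi}. norm (k \<theta>) \<le> B"
    using continuous_bounded_on_0_2pi[OF k] by blast
  have "k \<in> borel_measurable lborel_2pi"
    using borel_measurable_continuous_onI[OF k] by (simp add: measurable_restrict_space1)
  with f_meas have "(\<lambda>\<theta>. f (cis \<theta>) * k \<theta>) \<in> borel_measurable lborel_2pi" by measurable
  moreover have "AE \<theta> in lborel. \<theta> \<in> {0..2*pi} \<longrightarrow> norm (f (cis \<theta>) * k \<theta>) \<le> max M 0 * max B 0"
    using M
  proof eventually_elim
    case (elim \<theta>)
    show ?case
    proof
      assume "\<theta> \<in> {0..2*pi}"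
      then have "norm (f (cis \<theta>)) \<le> max M 0" "norm (k \<theta>) \<le> max B 0"
        using elim B by (auto simp: le_max_iff_disj)
      then show "norm (f (cis \<theta>) * k \<theta>) \<le> max M 0 * max B 0"
        by (simp add: norm_mult mult_mono)
    qed
  qed
  ultimately show ?thesis by (rule integrable_lborel_2pi_bounded)
qed

lemma integral_Linf_mult_trig_poly_cong:
  assumes f: "Linf f" and h: "Linf h"
    and fourier_eq: "\<And>m. \<bar>m\<bar> \<le> int N \<Longrightarrow> fourier f m = fourier h m"
    and k: "trig_poly N k"
  shows "integral\<^sup>L lborel_2pi (\<lambda>\<theta>. f (cis \<theta>) * k \<theta>)
       = integral\<^sup>L lborel_2pi (\<lambda>\<theta>. h (cis \<theta>) * k \<theta>)"
proof -
  obtain d where d: "\<And>\<theta>. k \<theta> = (\<Sum>m\<in>{- int N..int N}. d m * cis (of_int m * \<theta>))"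
    using k by (auto simp: trig_poly_def)
  have "integral\<^sup>L lborel_2pi (\<lambda>\<theta>. F (cis \<theta>) * k \<theta>)
      = (\<Sum>m\<in>{- int N..int N}. d m * (2 * pi * fourier F (- m)))" if F: "Linf F" for F
  proof -
    have "integrable lborel_2pi (\<lambda>\<theta>. F (cis \<theta>) * cis (of_int m * \<theta>))" for m
      by (rule integrable_lborel_2pi_Linf_mult[OF F]) (intro continuous_intros)
    moreover have "F (cis \<theta>) * k \<theta> = (\<Sum>m\<in>{- int N..int N}. d m * (F (cis \<theta>) * cis (of_int m * \<theta>)))"
      for \<theta> by (simp add: d sum_distrib_left mult_ac)
    ultimately have "integral\<^sup>L lborel_2pi (\<lambda>\<theta>. F (cis \<theta>) * k \<theta>)
        = (\<Sum>m\<in>{- int N..int N}. integral\<^sup>L lborel_2pi (\<lambda>\<theta>. d m * (F (cis \<theta>) * cis (of_int m * \<theta>))))"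
      by (simp add: Bochner_Integration.integral_sum)
    also have "\<dots> = (\<Sum>m\<in>{- int N..int N}. d m * (2 * pi * fourier F (- m)))"
      by (simp add: fourier_def set_integral_eq_lborel_2pi)
    finally show ?thesis .
  qed
  then show ?thesis using f h fourier_eq by (auto intro!: sum.cong)
qed

section \<open>Minimality\<close>

definition blaschke_dual :: "complex \<Rightarrow> (nat \<Rightarrow> complex) \<Rightarrow> nat \<Rightarrow> real \<Rightarrow> real" where
  "blaschke_dual lam a n \<theta> =
     sin (blaschke_arg lam a n \<theta>) * (norm (\<Prod>k<n. 1 - cnj (a k) * cis \<theta>))\<^sup>2"

lemma cnj_mult_cis_neq_1:
  assumes "norm a < 1" shows "cnj a * cis t \<noteq> 1"
proof
  assume "cnj a * cis t = 1"
  then have "norm (cnj a * cis t) = 1" by simp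
  with assms show False by (simp add: norm_mult)
qed

lemma blaschke_dual_eq_Im:
  assumes "is_blaschke lam a n"
  shows "blaschke_dual lam a n \<theta>
       = Im (lam * (\<Prod>k<n. (cis \<theta> - a k) * cnj (1 - cnj (a k) * cis \<theta>)))"
proof -
  define q where "q k = 1 - cnj (a k) * cis \<theta>" for k
  have q: "q k \<noteq> 0" if "k < n" for k
    using assms that by (simp add: q_def is_blaschke_def cnj_mult_cis_neq_1)
  have "lam * (\<Prod>k<n. (cis \<theta> - a k) * cnj (q k))
      = lam * (\<Prod>k<n. (cis \<theta> - a k) / q k * (q k * cnj (q k)))"
    using q by (intro arg_cong[where f = "(*) lam"] prod.cong) auto
  also have "\<dots> = blaschke lam a n (cis \<theta>) * (\<Prod>k<n. q k * cnj (q k))"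
    unfolding blaschke_def q_def prod.distrib by (simp only: mult.assoc)
  also have "(\<Prod>k<n. q k * cnj (q k)) = (\<Prod>k<n. q k) * cnj (\<Prod>k<n. q k)"
    by (simp add: prod.distrib)
  also have "\<dots> = complex_of_real ((norm (\<Prod>k<n. q k))\<^sup>2)"
    by (rule complex_norm_square[symmetric])
  finally show ?thesis by (simp add: blaschke_cis[OF assms] blaschke_dual_def q_def)
qed

lemma trig_poly_blaschke_dual:
  assumes "is_blaschke lam a n"
  shows "trig_poly n (\<lambda>\<theta>. complex_of_real (blaschke_dual lam a n \<theta>))"
proof -
  have factor: "trig_poly 1 (\<lambda>\<theta>. (cis \<theta> - b) * cnj (1 - cnj b * cis \<theta>))" for b
  proof -
    have "(cis \<theta> - b) * cnj (1 - cnj b * cis \<theta>)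
        = cis (of_int 1 * \<theta>) + (- 2 * b) * cis (of_int 0 * \<theta>) + b\<^sup>2 * cis (of_int (- 1) * \<theta>)"
      for \<theta> by (simp add: cis_cnj cis_mult power2_eq_square algebra_simps)
    moreover have "trig_poly 1 (\<lambda>\<theta>. 1 * cis (of_int 1 * \<theta>) + (- 2 * b) * cis (of_int 0 * \<theta>)
        + b\<^sup>2 * cis (of_int (- 1) * \<theta>))"
      by (intro trig_poly_add trig_poly_cis) auto
    ultimately show ?thesis by simp
  qed
  have "trig_poly n (\<lambda>\<theta>. complex_of_real
      (Im (lam * (\<Prod>k<n. (cis \<theta> - a k) * cnj (1 - cnj (a k) * cis \<theta>)))))"
    using trig_poly_prod[of "{..<n}" "\<lambda>_. 1", OF factor] by (intro trig_poly_Im trig_poly_cmult) simp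
  then show ?thesis by (simp add: blaschke_dual_eq_Im[OF assms])
qed

lemma sgn_blaschke_dual:
  assumes "is_blaschke lam a n"
  shows "sgn (blaschke_dual lam a n \<theta>) = sgn (sin (blaschke_arg lam a n \<theta>))"
proof -
  have "(\<Prod>k<n. 1 - cnj (a k) * cis \<theta>) \<noteq> 0"
    using assms by (simp add: is_blaschke_def cnj_mult_cis_neq_1)
  then show ?thesis by (simp add: blaschke_dual_def sgn_mult)
qed

lemma blaschke_dual_nonzero:
  assumes "is_blaschke lam a n" and "1 \<le> n"
  shows "\<exists>t\<in>{0..2*pi}. blaschke_dual lam a n t \<noteq> 0"
proof (cases "sin (blaschke_arg lam a n 0) = 0")
  case True
  let ?P = "blaschke_arg lam a n"
  have "?P 0 + pi / 2 \<le> ?P (2 * pi)"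
    using blaschke_arg_add_2pi[of lam a n 0] \<open>1 \<le> n\<close> pi_gt_zero
    by (simp add: mult_right_mono[of 1 "real n" pi])
  then obtain t where "t \<in> {0..2*pi}" "?P t = ?P 0 + pi / 2"
    using IVT[of ?P 0 "?P 0 + pi / 2" "2 * pi"] isCont_blaschke_arg[OF assms(1)] by auto
  moreover have "sin (?P 0 + pi / 2) \<noteq> 0"
    using True sin_cos_squared_add[of "?P 0"] by (auto simp: sin_add)
  ultimately show ?thesis
    using sgn_blaschke_dual[OF assms(1), of t] by (metis sgn_0_0)
next
  case False
  then have "blaschke_dual lam a n 0 \<noteq> 0"
    using sgn_blaschke_dual[OF assms(1), of 0] by (metis sgn_0_0)
  then show ?thesis by force
qed

lemma integral_lborel_2pi_pos:
  fixes h :: "real \<Rightarrow> real"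
  assumes cont: "continuous_on UNIV h" and nonneg: "\<And>\<theta>. 0 \<le> h \<theta>"
    and t: "t \<in> {0..2*pi}" and "h t \<noteq> 0"
  shows "0 < integral\<^sup>L lborel_2pi h"
proof -
  have cont': "continuous_on (cbox 0 (2*pi)) h" using continuous_on_subset[OF cont] by blast
  then have "set_integrable lborel {0..2*pi} h"
    unfolding set_integrable_def by (intro borel_integrable_compact) auto
  note Lebesgue_eq_HK = set_borel_integral_eq_integral[OF this]
  have "(h has_integral integral\<^sup>L lborel_2pi h) (cbox 0 (2*pi))"
    using integrable_integral[OF Lebesgue_eq_HK(1)] Lebesgue_eq_HK(2) by (simp add: set_integral_eq_lborel_2pi)
  moreover have "integral\<^sup>L lborel_2pi h \<noteq> 0"
  proof
    assume "integral\<^sup>L lborel_2pi h = 0"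
    moreover have "pi \<in> box 0 (2*pi)" by simp
    then have "box 0 (2*pi) \<noteq> {}" by blast
    ultimately have "h t = 0"
      using \<open>(h has_integral _) _\<close> cont' nonneg t by (intro has_integral_0_cbox_imp_0) auto
    with \<open>h t \<noteq> 0\<close> show False ..
  qed
  moreover have "0 \<le> integral\<^sup>L lborel_2pi h" using nonneg by simp
  ultimately show ?thesis by linarith
qed

lemma integral_abs_blaschke_dual_pos:
  assumes "is_blaschke lam a n" and "1 \<le> n"
  shows "0 < integral\<^sup>L lborel_2pi (\<lambda>\<theta>. \<bar>blaschke_dual lam a n \<theta>\<bar>)"
proof -
  have "continuous_on UNIV (blaschke_dual lam a n)"
    using continuous_on_trig_poly[OF trig_poly_blaschke_dual[OF assms(1)]] by simp
  then have "continuous_on UNIV (\<lambda>\<theta>. \<bar>blaschke_dual lam a n \<theta>\<bar>)"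
    by (intro continuous_intros) simp
  then show ?thesis
    using blaschke_dual_nonzero[OF assms] by (auto intro: integral_lborel_2pi_pos)
qed

lemma ess_bound_ge_of_dual_trig_poly:
  assumes f: "Linf f" and \<psi>: "Linf \<psi>"
    and fourier_eq: "\<And>m. \<bar>m\<bar> \<le> int N \<Longrightarrow> fourier f m = fourier \<psi> m"
    and g: "trig_poly N (\<lambda>\<theta>. complex_of_real (g \<theta>))"
    and aligned: "\<And>\<theta>. \<psi> (cis \<theta>) * complex_of_real (g \<theta>) = complex_of_real (c * \<bar>g \<theta>\<bar>)"
    and G_pos: "0 < integral\<^sup>L lborel_2pi (\<lambda>\<theta>. \<bar>g \<theta>\<bar>)"
    and M: "AE \<theta> in lborel. \<theta> \<in> {0..2*pi} \<longrightarrow> norm (f (cis \<theta>)) \<le> M"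
  shows "c \<le> M"
proof -
  define G where "G = integral\<^sup>L lborel_2pi (\<lambda>\<theta>. \<bar>g \<theta>\<bar>)"
  have g_cont: "continuous_on UNIV (\<lambda>\<theta>. complex_of_real (g \<theta>))"
    by (rule continuous_on_trig_poly[OF g])
  have "continuous_on UNIV g" using g_cont by simp
  then have abs_g_cont: "continuous_on UNIV (\<lambda>\<theta>. \<bar>g \<theta>\<bar>)"
    by (intro continuous_intros) simp
  have fg_int: "integrable lborel_2pi (\<lambda>\<theta>. f (cis \<theta>) * complex_of_real (g \<theta>))"
    by (rule integrable_lborel_2pi_Linf_mult[OF f g_cont])
  have g_int: "integrable lborel_2pi (\<lambda>\<theta>. \<bar>g \<theta>\<bar>)"
    by (rule integrable_lborel_2pi_continuous[OF abs_g_cont])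
  have "c * G \<le> norm (complex_of_real (c * G))" by (simp only: norm_of_real abs_ge_self)
  also have "complex_of_real (c * G) = integral\<^sup>L lborel_2pi (\<lambda>\<theta>. \<psi> (cis \<theta>) * complex_of_real (g \<theta>))"
    by (simp add: aligned G_def)
  also have "\<dots> = integral\<^sup>L lborel_2pi (\<lambda>\<theta>. f (cis \<theta>) * complex_of_real (g \<theta>))"
    using integral_Linf_mult_trig_poly_cong[OF f \<psi> fourier_eq g] by simp
  also have "norm \<dots> \<le> integral\<^sup>L lborel_2pi (\<lambda>\<theta>. norm (f (cis \<theta>) * complex_of_real (g \<theta>)))"
    by (rule integral_norm_bound)
  also have "\<dots> \<le> integral\<^sup>L lborel_2pi (\<lambda>\<theta>. M * \<bar>g \<theta>\<bar>)"
  proof (rule integral_mono_AE)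
    show "AE \<theta> in lborel_2pi. norm (f (cis \<theta>) * complex_of_real (g \<theta>)) \<le> M * \<bar>g \<theta>\<bar>"
      using M by (auto simp: AE_restrict_space_iff norm_mult mult_right_mono)
  qed (use fg_int g_int in auto)
  also have "\<dots> = M * G" by (simp add: G_def)
  finally show ?thesis using G_pos by (simp add: G_def)
qed

lemma norm_of_real_mult_sgn_le: "norm (complex_of_real (c * sgn x)) \<le> \<bar>c\<bar>"
  unfolding norm_of_real abs_mult by (simp add: abs_sgn_eq)

lemma Linf_sgn_sin:
  assumes "\<And>x. isCont P x"
    and "\<And>\<theta>. f (cis \<theta>) = complex_of_real (c * sgn (sin (P \<theta>)))"
  shows "Linf f"
proof -
  have [measurable]: "P \<in> borel_measurable borel"
    using assms(1) by (intro borel_measurable_continuous_onI continuous_at_imp_continuous_on) auto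
  have "(\<lambda>\<theta>. f (cis \<theta>)) \<in> borel_measurable borel" unfolding assms(2) by measurable
  moreover have "AE \<theta> in lborel. \<theta> \<in> {0..2*pi} \<longrightarrow> norm (f (cis \<theta>)) \<le> \<bar>c\<bar>"
    by (intro AE_I2 impI) (simp only: assms(2) norm_of_real_mult_sgn_le)
  ultimately show ?thesis unfolding Linf_def by (auto intro: measurable_restrict_space1)
qed

lemma fourier_eq_of_mem_G_set:
  assumes "f \<in> G_set (\<lambda>j k. fourier \<psi> (int j - int k)) N" and "\<bar>m\<bar> \<le> int N"
  shows "fourier f m = fourier \<psi> m"
proof (cases "0 \<le> m")
  case True
  then show ?thesis using assms[unfolded G_set_def] by (force dest: spec[of _ "nat m"] spec[of _ 0])
next
  case False
  then show ?thesis using assms[unfolded G_set_def] by (force dest: spec[of _ 0] spec[of _ "nat (- m)"])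
qed

lemma ess_norm_eq_c_A_eq_of_minimal:
  assumes "\<psi> \<in> G_set A N"
    and "AE \<theta> in lborel. \<theta> \<in> {0..2*pi} \<longrightarrow> norm (\<psi> (cis \<theta>)) \<le> c"
    and "\<And>f M. f \<in> G_set A N \<Longrightarrow> AE \<theta> in lborel. \<theta> \<in> {0..2*pi} \<longrightarrow> norm (f (cis \<theta>)) \<le> M \<Longrightarrow> c \<le> M"
  shows "ess_norm \<psi> = c" and "c_A A N = c"
proof -
  have "c \<le> ess_norm f" if "f \<in> G_set A N" for f
    unfolding ess_norm_def
  proof (rule cInf_greatest)
    show "{M. AE \<theta> in lborel. \<theta> \<in> {0..2*pi} \<longrightarrow> norm (f (cis \<theta>)) \<le> M} \<noteq> {}"
      using that by (auto simp: G_set_def Linf_def)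
  qed (use assms(3) that in blast)
  moreover show "ess_norm \<psi> = c"
    unfolding ess_norm_def by (rule cInf_eq_minimum) (use assms in auto)
  ultimately show "c_A A N = c"
    unfolding c_A_def by (intro cInf_eq_minimum) (use assms(1) in auto)
qed

theorem mainTheorem2:
  fixes N n :: nat and lam :: complex and a :: "nat \<Rightarrow> complex" and c :: real
    and w \<psi> :: "complex \<Rightarrow> complex" and A :: "nat \<Rightarrow> nat \<Rightarrow> complex"
  assumes "0 < N" and "1 \<le> n" and "n \<le> N"
    and "is_blaschke lam a n"
    and "0 < c"
    and "w = blaschke lam a n"
    and "\<psi> = (\<lambda>\<zeta>. complex_of_real (2 * c / pi * Arg ((1 + w \<zeta>) / (1 - w \<zeta>))))"
    and "A = (\<lambda>j k. fourier \<psi> (int j - int k))"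
  shows "alt_step \<psi> c n \<and> \<psi> \<in> G_set A N \<and> ess_norm \<psi> = c \<and> c_A A N = c"
proof -
  note bl = assms(4)
  let ?P = "blaschke_arg lam a n" and ?g = "blaschke_dual lam a n"
  have \<psi>_cis: "\<psi> (cis \<theta>) = complex_of_real (c * sgn (sin (?P \<theta>)))" for \<theta>
    using assms(6,7) by (simp add: blaschke_cis[OF bl] Arg_one_plus_cis_div_one_minus_cis)
  have Linf: "Linf \<psi>" by (rule Linf_sgn_sin[OF isCont_blaschke_arg[OF bl] \<psi>_cis])
  then have G: "\<psi> \<in> G_set A N" by (simp add: G_set_def assms(8))
  have "\<psi> (cis \<theta>) * complex_of_real (?g \<theta>) = complex_of_real (c * \<bar>?g \<theta>\<bar>)" for \<theta>
    by (simp add: \<psi>_cis flip: sgn_blaschke_dual[OF bl] of_real_mult) (metis abs_sgn mult.commute)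
  then have "c \<le> M"
    if "f \<in> G_set A N" and "AE \<theta> in lborel. \<theta> \<in> {0..2*pi} \<longrightarrow> norm (f (cis \<theta>)) \<le> M" for f M
    using that Linf fourier_eq_of_mem_G_set[of f \<psi> N] integral_abs_blaschke_dual_pos[OF bl assms(2)]
      trig_poly_mono[OF trig_poly_blaschke_dual[OF bl] assms(3)]
    by (intro ess_bound_ge_of_dual_trig_poly[of f \<psi> N ?g c]) (auto simp: G_set_def assms(8))
  moreover have "AE \<theta> in lborel. \<theta> \<in> {0..2*pi} \<longrightarrow> norm (\<psi> (cis \<theta>)) \<le> c"
    using norm_of_real_mult_sgn_le[of c] assms(5) by (intro AE_I2 impI) (simp only: \<psi>_cis abs_of_pos)
  moreover have "alt_step \<psi> c n"
    using blaschke_arg_strict_mono[OF bl assms(2)] isCont_blaschke_arg[OF bl]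
      blaschke_arg_add_2pi assms(2) \<psi>_cis by (rule alt_step_of_sgn_sin)
  ultimately show ?thesis using ess_norm_eq_c_A_eq_of_minimal[OF G] G by blast
qed

end
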